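(* Let $d\ge1$, let $U$ be a convolution kernel on $\mathbb{R}^d$ and $\mathcal{L}$ a linear (pseudo-)differential operator containing only even-order derivatives such that $\varphi:=U\ast\rho$ satisfies $\mathcal{L}\varphi=\rho$ on $\mathbb{R}^d$. Let $\rho$ be a smooth compactly supported function on $\mathbb{R}^d$ whose moments vanish up to order $m\in\mathbb{N}$, i.e. $\int_{\mathbb{R}^d}\rho({\mathbf x}){\mathbf x}^{\bm\alpha}\,{\rm d}{\mathbf x}=0$ for all $|\bm\alpha|=0,1,\dots,m$. Let $\Omega$ be a bounded domain with $\Omega_0:=\operatorname{supp}\{\rho\}\subset\Omega$, and let $\widetilde\varphi$ solve $$\mathcal{L}\widetilde\varphi({\mathbf x})=\rho({\mathbf x}),\ {\mathbf x}\in\Omega,\qquad \widetilde\varphi|_{\partial\Omega}=0.$$ Assume that the maximum norm estimate holds for this equation, i.e. every $w$ with $\mathcal{L}w=0$ in $\Omega$ satisfies $\|w\|_{\infty(\Omega)}\le\|w\|_{\infty(\partial\Omega)}$. Then $$\|\varphi-\widetilde\varphi\|_{\infty(\Omega)}\lesssim\sum_{|\bm\beta|=m+1}\ \max_{{\mathbf x}\in\partial\Omega,\ {\mathbf y}\in\Omega_0,\ 0\le s\le1}\big|\partial^{\bm\beta}U({\mathbf x}-s{\mathbf y})\big|.$$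
   Context: $\|f\|_{\infty(A)}=\sup_{{\mathbf x}\in A}|f({\mathbf x})|$. $A\lesssim B$ means $A\le cB$ for a constant $c>0$. For a multi-index $\bm\beta\in\mathbb{N}^d$: $|\bm\beta|=\sum_i\beta_i$, ${\mathbf x}^{\bm\beta}=\prod_ix_i^{\beta_i}$, $\partial^{\bm\beta}=\partial_{x_1}^{\beta_1}\cdots\partial_{x_d}^{\beta_d}$. *)

theory Defs
  imports "HOL-Analysis.Analysis" "HOL-Library.Multiset"
begin

text \<open>Points of R^d are vectors of type real^'n (d = CARD('n) \<ge> 1).
  Multi-indices beta in N^d are encoded as multisets over the coordinate
  index type 'n: count beta i = beta_i, |beta| = size beta.\<close>

definition partial_deriv :: "'n::finite \<Rightarrow> (real^'n \<Rightarrow> real) \<Rightarrow> real^'n \<Rightarrow> real" where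
  "partial_deriv i f x = deriv (\<lambda>t. f (x + t *\<^sub>R axis i 1)) 0"

fun partial_list :: "'n::finite list \<Rightarrow> (real^'n \<Rightarrow> real) \<Rightarrow> real^'n \<Rightarrow> real" where
  "partial_list [] f = f"
| "partial_list (i # is) f = partial_deriv i (partial_list is f)"

definition multi_partial :: "'n::finite multiset \<Rightarrow> (real^'n \<Rightarrow> real) \<Rightarrow> real^'n \<Rightarrow> real" where
  "multi_partial \<beta> f = partial_list (SOME xs. mset xs = \<beta>) f"

definition monomial :: "'n::finite multiset \<Rightarrow> real^'n \<Rightarrow> real" where
  "monomial \<beta> x = (\<Prod>i\<in>#\<beta>. x $ i)"

definition C_k_on :: "nat \<Rightarrow> (real^'n::finite) set \<Rightarrow> (real^'n \<Rightarrow> real) \<Rightarrow> bool" where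
  "C_k_on k S f \<longleftrightarrow>
     (\<forall>xs. length xs \<le> k \<longrightarrow> continuous_on S (partial_list xs f)) \<and>
     (\<forall>xs. length xs < k \<longrightarrow> (\<forall>x\<in>S. partial_list xs f differentiable (at x)))"

definition smooth_on :: "(real^'n::finite) set \<Rightarrow> (real^'n \<Rightarrow> real) \<Rightarrow> bool" where
  "smooth_on S f \<longleftrightarrow> (\<forall>k. C_k_on k S f)"

definition supp :: "(real^'n::finite \<Rightarrow> real) \<Rightarrow> (real^'n) set" where
  "supp f = closure {x. f x \<noteq> 0}"

definition convolution :: "(real^'n::finite \<Rightarrow> real) \<Rightarrow> (real^'n \<Rightarrow> real) \<Rightarrow> real^'n \<Rightarrow> real" where
  "convolution U \<rho> x = integral UNIV (\<lambda>y. U (x - y) * \<rho> y)"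

definition linear_op :: "((real^'n::finite \<Rightarrow> real) \<Rightarrow> (real^'n \<Rightarrow> real)) \<Rightarrow> bool" where
  "linear_op L \<longleftrightarrow> (\<forall>a b f g. L (\<lambda>x. a * f x + b * g x) = (\<lambda>x. a * L f x + b * L g x))"

text \<open>"Contains only even-order derivatives": L commutes with the reflection x -> -x.\<close>
definition even_order_op :: "((real^'n::finite \<Rightarrow> real) \<Rightarrow> (real^'n \<Rightarrow> real)) \<Rightarrow> bool" where
  "even_order_op L \<longleftrightarrow> (\<forall>f. L (\<lambda>x. f (- x)) = (\<lambda>x. L f (- x)))"

end

theory Submission
  imports Defs
begin

(* For x on the boundary, expand y \<mapsto> U (x - y) by Taylor's formula of order m around y = 0,
  with the Lagrange remainder taken along the segment from x to x - y. The Taylor polynomial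
  integrates to zero against \<rho> because the moments of \<rho> vanish up to order m, so the convolution
  at x is bounded by the remainder alone: the (m+1)-st partial derivatives of U on these segments,
  weighted by the integral of |\<rho> y| |y^\<beta>| / (m+1)!, which depends only on \<rho> and m. The remainder
  sums partial derivatives over all ordered lists of directions; identifying each with the
  multi-index derivative requires the symmetry of mixed partial derivatives of a C^(m+1) function.
  Finally the difference of the convolution and the Dirichlet solution is annihilated by L in \<Omega>
  and equals the convolution on the boundary, so the maximum principle carries the bound into \<Omega>. *)

section \<open>Partial derivatives along lines\<close>

lemma has_real_derivative_along_line:
  fixes F :: "'a::real_normed_vector \<Rightarrow> real"
  assumes "F differentiable (at (q + t *\<^sub>R v))"
  shows "((\<lambda>s. F (q + s *\<^sub>R v)) has_real_derivative frechet_derivative F (at (q + t *\<^sub>R v)) v) (at t)"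
proof -
  let ?F' = "frechet_derivative F (at (q + t *\<^sub>R v))"
  have F': "(F has_derivative ?F') (at (q + t *\<^sub>R v))"
    using assms frechet_derivative_works by blast
  have line: "((\<lambda>s. q + s *\<^sub>R v) has_derivative (\<lambda>s. s *\<^sub>R v)) (at t)"
    by (auto intro!: derivative_eq_intros)
  have "((\<lambda>s. F (q + s *\<^sub>R v)) has_derivative (\<lambda>s. ?F' (s *\<^sub>R v))) (at t)"
    using has_derivative_compose[OF line F'] by (simp add: o_def)
  moreover have "(\<lambda>s. ?F' (s *\<^sub>R v)) = (*) (?F' v)"
    using linear_scale[OF has_derivative_linear[OF F']] by (auto simp: mult.commute)
  ultimately show ?thesis unfolding has_field_derivative_def by simp
qed

lemma partial_deriv_eq_frechet_derivative:
  assumes "F differentiable (at p)"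
  shows "partial_deriv i F p = frechet_derivative F (at p) (axis i 1)"
  unfolding partial_deriv_def
  by (rule DERIV_imp_deriv) (use has_real_derivative_along_line[of F p 0] assms in simp)

lemma has_real_derivative_along_axis:
  assumes "F differentiable (at (q + t *\<^sub>R axis i 1))"
  shows "((\<lambda>s. F (q + s *\<^sub>R axis i 1)) has_real_derivative partial_deriv i F (q + t *\<^sub>R axis i 1)) (at t)"
  using has_real_derivative_along_line[OF assms] partial_deriv_eq_frechet_derivative[OF assms] by simp

lemma linear_eq_sum_axis:
  fixes f :: "real^'n::finite \<Rightarrow> real"
  assumes "linear f"
  shows "f v = (\<Sum>i\<in>UNIV. v $ i * f (axis i 1))"
proof -
  have "f v = f (\<Sum>i\<in>UNIV. v $ i *\<^sub>R axis i 1)"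
    using basis_expansion[of v] by (simp add: scalar_mult_eq_scaleR)
  also have "\<dots> = (\<Sum>i\<in>UNIV. v $ i * f (axis i 1))"
    using assms by (simp add: linear_sum linear_scale)
  finally show ?thesis .
qed

lemma has_real_derivative_along_line_partials:
  fixes F :: "real^'n::finite \<Rightarrow> real"
  assumes "F differentiable (at (q + t *\<^sub>R v))"
  shows "((\<lambda>s. F (q + s *\<^sub>R v)) has_real_derivative
           (\<Sum>i\<in>UNIV. v $ i * partial_deriv i F (q + t *\<^sub>R v))) (at t)"
proof -
  have "linear (frechet_derivative F (at (q + t *\<^sub>R v)))"
    using assms frechet_derivative_works has_derivative_linear by blast
  then have "frechet_derivative F (at (q + t *\<^sub>R v)) v = (\<Sum>i\<in>UNIV. v $ i * partial_deriv i F (q + t *\<^sub>R v))"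
    by (subst linear_eq_sum_axis) (simp_all add: partial_deriv_eq_frechet_derivative[OF assms])
  then show ?thesis
    using has_real_derivative_along_line[OF assms] by simp
qed

lemma partial_deriv_cong_open:
  assumes "open S" "\<And>w. w \<in> S \<Longrightarrow> f w = g w" "z \<in> S"
  shows "partial_deriv i f z = partial_deriv i g z"
proof -
  obtain e where e: "e > 0" "ball z e \<subseteq> S"
    using assms open_contains_ball by blast
  have "eventually (\<lambda>t::real. t \<in> ball 0 e) (nhds 0)"
    using e by (intro eventually_nhds_in_open) auto
  then have "eventually (\<lambda>t. f (z + t *\<^sub>R axis i 1) = g (z + t *\<^sub>R axis i 1)) (nhds 0)"
    by eventually_elim (use e assms(2) in \<open>auto simp: dist_norm subset_iff\<close>)
  then have "DERIV (\<lambda>t. f (z + t *\<^sub>R axis i 1)) 0 :> D \<longleftrightarrow> DERIV (\<lambda>t. g (z + t *\<^sub>R axis i 1)) 0 :> D"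
    for D by (rule DERIV_cong_ev[OF refl _ refl])
  then show ?thesis
    unfolding partial_deriv_def deriv_def by simp
qed

section \<open>Symmetry of mixed partial derivatives\<close>

lemma double_difference_mean_value:
  fixes g :: "real^'n::finite \<Rightarrow> real" and z :: "real^'n" and i j :: 'n
  defines "p \<equiv> \<lambda>t s. z + t *\<^sub>R axis i 1 + s *\<^sub>R axis j 1"
  assumes h: "0 < h"
    and diff: "\<And>t s. t \<in> {0..h} \<Longrightarrow> s \<in> {0..h} \<Longrightarrow> g differentiable (at (p t s))"
    and diff_i: "\<And>t s. t \<in> {0..h} \<Longrightarrow> s \<in> {0..h} \<Longrightarrow> partial_deriv i g differentiable (at (p t s))"
  shows "\<exists>t\<in>{0..h}. \<exists>s\<in>{0..h}.
           g (p h h) - g (p h 0) - g (p 0 h) + g z = h\<^sup>2 * partial_deriv j (partial_deriv i g) (p t s)"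
proof -
  let ?ei = "axis i (1::real)" and ?ej = "axis j (1::real)"
  define \<phi> where "\<phi> t = g ((z + h *\<^sub>R ?ej) + t *\<^sub>R ?ei) - g (z + t *\<^sub>R ?ei)" for t
  define \<phi>' where
    "\<phi>' t = partial_deriv i g ((z + h *\<^sub>R ?ej) + t *\<^sub>R ?ei) - partial_deriv i g (z + t *\<^sub>R ?ei)" for t
  have \<phi>': "DERIV \<phi> t :> \<phi>' t" if "0 \<le> t" "t \<le> h" for t
  proof -
    have "(z + h *\<^sub>R ?ej) + t *\<^sub>R ?ei = p t h" "z + t *\<^sub>R ?ei = p t 0"
      by (simp_all add: p_def add_ac)
    then show ?thesis
      unfolding \<phi>_def \<phi>'_def using diff that h
      by (intro DERIV_diff has_real_derivative_along_axis) auto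
  qed
  obtain t where t: "0 < t" "t < h" "\<phi> h - \<phi> 0 = h * \<phi>' t"
    using MVT2[OF h \<phi>'] by auto
  define \<psi> where "\<psi> s = partial_deriv i g ((z + t *\<^sub>R ?ei) + s *\<^sub>R ?ej)" for s
  have \<psi>': "DERIV \<psi> s :> partial_deriv j (partial_deriv i g) (p t s)" if "0 \<le> s" "s \<le> h" for s
    unfolding \<psi>_def p_def
    by (rule has_real_derivative_along_axis) (use diff_i t that in \<open>auto simp: p_def\<close>)
  obtain s where s: "0 < s" "s < h"
    "\<psi> h - \<psi> 0 = h * partial_deriv j (partial_deriv i g) (p t s)"
    using MVT2[OF h \<psi>'] by auto
  have "\<phi>' t = \<psi> h - \<psi> 0"
    unfolding \<phi>'_def \<psi>_def by (simp add: add_ac)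
  moreover have "\<phi> h - \<phi> 0 = g (p h h) - g (p h 0) - g (p 0 h) + g z"
    unfolding \<phi>_def p_def by (simp add: add_ac)
  ultimately show ?thesis
    using t s by (intro bexI[of _ t] bexI[of _ s]) (auto simp: power2_eq_square)
qed

lemma mixed_partials_meet_in_ball:
  fixes g :: "real^'n::finite \<Rightarrow> real"
  assumes d: "0 < d"
    and diff: "\<And>w. w \<in> ball z d \<Longrightarrow> g differentiable (at w)"
    and diff_i: "\<And>w. w \<in> ball z d \<Longrightarrow> partial_deriv i g differentiable (at w)"
    and diff_j: "\<And>w. w \<in> ball z d \<Longrightarrow> partial_deriv j g differentiable (at w)"
  obtains w w' where "w \<in> ball z d" "w' \<in> ball z d"
    "partial_deriv j (partial_deriv i g) w = partial_deriv i (partial_deriv j g) w'"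
proof -
  define h where "h = d / 3"
  have h: "h > 0" using d by (simp add: h_def)
  have square: "z + t *\<^sub>R axis k 1 + s *\<^sub>R axis l 1 \<in> ball z d"
    if "t \<in> {0..h}" "s \<in> {0..h}" for t s k l
  proof -
    have "norm (t *\<^sub>R axis k (1::real) + s *\<^sub>R axis l 1) \<le> \<bar>t\<bar> + \<bar>s\<bar>"
      using norm_triangle_ineq[of "t *\<^sub>R axis k (1::real)" "s *\<^sub>R axis l 1"] by simp
    moreover have "dist z (z + t *\<^sub>R axis k 1 + s *\<^sub>R axis l 1) = norm (t *\<^sub>R axis k (1::real) + s *\<^sub>R axis l 1)"
      by (metis add.assoc add_diff_cancel_left' dist_commute dist_norm)
    ultimately show ?thesis
      using that d by (simp add: h_def)
  qed
  have "\<exists>t\<in>{0..h}. \<exists>s\<in>{0..h}.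
      g (z + h *\<^sub>R axis i 1 + h *\<^sub>R axis j 1) - g (z + h *\<^sub>R axis i 1 + 0 *\<^sub>R axis j 1)
        - g (z + 0 *\<^sub>R axis i 1 + h *\<^sub>R axis j 1) + g z
      = h\<^sup>2 * partial_deriv j (partial_deriv i g) (z + t *\<^sub>R axis i 1 + s *\<^sub>R axis j 1)"
    by (rule double_difference_mean_value[OF h]) (use square diff diff_i in blast)+
  then obtain t s where ts: "t \<in> {0..h}" "s \<in> {0..h}"
    "g (z + h *\<^sub>R axis i 1 + h *\<^sub>R axis j 1) - g (z + h *\<^sub>R axis i 1) - g (z + h *\<^sub>R axis j 1) + g z
       = h\<^sup>2 * partial_deriv j (partial_deriv i g) (z + t *\<^sub>R axis i 1 + s *\<^sub>R axis j 1)"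
    by auto
  have "\<exists>t\<in>{0..h}. \<exists>s\<in>{0..h}.
      g (z + h *\<^sub>R axis j 1 + h *\<^sub>R axis i 1) - g (z + h *\<^sub>R axis j 1 + 0 *\<^sub>R axis i 1)
        - g (z + 0 *\<^sub>R axis j 1 + h *\<^sub>R axis i 1) + g z
      = h\<^sup>2 * partial_deriv i (partial_deriv j g) (z + t *\<^sub>R axis j 1 + s *\<^sub>R axis i 1)"
    by (rule double_difference_mean_value[OF h]) (use square diff diff_j in blast)+
  then obtain t' s' where ts': "t' \<in> {0..h}" "s' \<in> {0..h}"
    "g (z + h *\<^sub>R axis i 1 + h *\<^sub>R axis j 1) - g (z + h *\<^sub>R axis j 1) - g (z + h *\<^sub>R axis i 1) + g z
       = h\<^sup>2 * partial_deriv i (partial_deriv j g) (z + t' *\<^sub>R axis j 1 + s' *\<^sub>R axis i 1)"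
    by (auto simp: add_ac)
  have "h\<^sup>2 * partial_deriv j (partial_deriv i g) (z + t *\<^sub>R axis i 1 + s *\<^sub>R axis j 1)
      = h\<^sup>2 * partial_deriv i (partial_deriv j g) (z + t' *\<^sub>R axis j 1 + s' *\<^sub>R axis i 1)"
    using ts(3) ts'(3) by linarith
  then show thesis
    using h that[OF square[OF ts(1,2)] square[OF ts'(1,2)]] by simp
qed

lemma partial_deriv_commute:
  fixes g :: "real^'n::finite \<Rightarrow> real"
  assumes S: "open S" "z \<in> S"
    and cont_ij: "continuous_on S (partial_deriv i (partial_deriv j g))"
    and cont_ji: "continuous_on S (partial_deriv j (partial_deriv i g))"
    and diff: "\<And>w. w \<in> S \<Longrightarrow> g differentiable (at w)"
    and diff_i: "\<And>w. w \<in> S \<Longrightarrow> partial_deriv i g differentiable (at w)"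
    and diff_j: "\<And>w. w \<in> S \<Longrightarrow> partial_deriv j g differentiable (at w)"
  shows "partial_deriv i (partial_deriv j g) z = partial_deriv j (partial_deriv i g) z"
proof -
  let ?A = "partial_deriv i (partial_deriv j g) z" and ?B = "partial_deriv j (partial_deriv i g) z"
  have close: "\<bar>?A - ?B\<bar> < 2 * e" if e: "e > 0" for e
  proof -
    obtain d1 where "d1 > 0"
      "\<forall>w\<in>S. dist w z < d1 \<longrightarrow> dist (partial_deriv i (partial_deriv j g) w) ?A < e"
      using cont_ij S e unfolding continuous_on_iff by blast
    moreover obtain d2 where "d2 > 0"
      "\<forall>w\<in>S. dist w z < d2 \<longrightarrow> dist (partial_deriv j (partial_deriv i g) w) ?B < e"
      using cont_ji S e unfolding continuous_on_iff by blast
    moreover obtain d0 where "d0 > 0" "ball z d0 \<subseteq> S"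
      using S open_contains_ball by blast
    ultimately obtain d where d: "d > 0" "ball z d \<subseteq> S"
      "\<And>w. w \<in> ball z d \<Longrightarrow> \<bar>partial_deriv i (partial_deriv j g) w - ?A\<bar> < e"
      "\<And>w. w \<in> ball z d \<Longrightarrow> \<bar>partial_deriv j (partial_deriv i g) w - ?B\<bar> < e"
      by (intro that[of "min d0 (min d1 d2)"]) (auto simp: dist_real_def dist_commute subset_iff)
    have "g differentiable (at w)" "partial_deriv i g differentiable (at w)"
      "partial_deriv j g differentiable (at w)" if "w \<in> ball z d" for w
      using d(2) that diff diff_i diff_j by auto
    then obtain w w' where w: "w \<in> ball z d" "w' \<in> ball z d"
      "partial_deriv j (partial_deriv i g) w = partial_deriv i (partial_deriv j g) w'"
      using mixed_partials_meet_in_ball[OF d(1)] by blast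
    then show ?thesis
      using d(3)[OF w(2)] d(4)[OF w(1)] by linarith
  qed
  show ?thesis
    using close[of "\<bar>?A - ?B\<bar> / 2"] by (cases "?A = ?B") auto
qed

lemma C_k_onD:
  assumes "C_k_on k S f"
  shows C_k_on_continuous: "length xs \<le> k \<Longrightarrow> continuous_on S (partial_list xs f)"
    and C_k_on_differentiable: "length xs < k \<Longrightarrow> x \<in> S \<Longrightarrow> partial_list xs f differentiable (at x)"
  using assms unfolding C_k_on_def by auto

lemma smooth_on_imp_continuous_on: "smooth_on S f \<Longrightarrow> continuous_on S f"
  using C_k_on_continuous[of 0 S f "[]"] unfolding smooth_on_def by simp

lemma partial_list_insert:
  assumes C: "C_k_on k S f" and S: "open S" and len: "length (ys1 @ a # ys2) \<le> k" and z: "z \<in> S"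
  shows "partial_deriv a (partial_list (ys1 @ ys2) f) z = partial_list (ys1 @ a # ys2) f z"
  using len z
proof (induction ys1 arbitrary: z)
  case Nil
  then show ?case by simp
next
  case (Cons b ys1)
  let ?g = "partial_list (ys1 @ ys2) f"
  have "partial_deriv a (partial_deriv b ?g) z = partial_deriv b (partial_deriv a ?g) z"
  proof (rule partial_deriv_commute[OF S Cons.prems(2)])
    show "continuous_on S (partial_deriv a (partial_deriv b ?g))"
      using C_k_on_continuous[OF C, of "a # b # ys1 @ ys2"] Cons.prems(1) by simp
    show "continuous_on S (partial_deriv b (partial_deriv a ?g))"
      using C_k_on_continuous[OF C, of "b # a # ys1 @ ys2"] Cons.prems(1) by simp
    show "?g differentiable (at w)" "partial_deriv a ?g differentiable (at w)"
      "partial_deriv b ?g differentiable (at w)" if "w \<in> S" for w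
      using C_k_on_differentiable[OF C _ that, of "ys1 @ ys2"] C_k_on_differentiable[OF C _ that, of "a # ys1 @ ys2"]
        C_k_on_differentiable[OF C _ that, of "b # ys1 @ ys2"] Cons.prems(1) by simp_all
  qed
  also have "\<dots> = partial_deriv b (partial_list (ys1 @ a # ys2) f) z"
    using Cons.IH Cons.prems(1) by (intro partial_deriv_cong_open[OF S _ Cons.prems(2)]) simp
  finally show ?case by simp
qed

lemma partial_list_mset_eq:
  assumes C: "C_k_on k S f" and S: "open S"
    and "length xs \<le> k" "mset xs = mset ys" "z \<in> S"
  shows "partial_list xs f z = partial_list ys f z"
  using assms(3-5)
proof (induction xs arbitrary: ys z)
  case Nil
  then show ?case by simp
next
  case (Cons a xs)
  have "a \<in> set ys"
    using Cons.prems(2) by (metis list.set_intros(1) set_mset_mset)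
  then obtain ys1 ys2 where ys: "ys = ys1 @ a # ys2"
    using split_list by metis
  have len: "length ys \<le> k"
    using Cons.prems(1) mset_eq_length[OF Cons.prems(2)] by simp
  have "partial_list xs f w = partial_list (ys1 @ ys2) f w" if "w \<in> S" for w
    using Cons.IH[OF _ _ that] Cons.prems(1,2) ys by simp
  then have "partial_list (a # xs) f z = partial_deriv a (partial_list (ys1 @ ys2) f) z"
    unfolding partial_list.simps by (rule partial_deriv_cong_open[OF S _ Cons.prems(3)])
  also have "\<dots> = partial_list ys f z"
    using partial_list_insert[OF C S] len Cons.prems(3) ys by simp
  finally show ?case .
qed

lemma multi_partial_mset:
  assumes "C_k_on k S f" "open S" "length xs \<le> k" "z \<in> S"
  shows "multi_partial (mset xs) f z = partial_list xs f z"
proof -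
  define ys where "ys = (SOME ys. mset ys = mset xs)"
  have "mset ys = mset xs"
    unfolding ys_def by (rule someI[of _ xs]) simp
  then have "partial_list xs f z = partial_list ys f z"
    by (intro partial_list_mset_eq[OF assms(1,2,3) _ assms(4)]) simp
  then show ?thesis
    unfolding multi_partial_def ys_def by simp
qed

section \<open>Taylor expansion along a segment\<close>

lemma finite_lists_length: "finite {xs :: 'a::finite list. length xs = k}"
  using finite_lists_length_eq[of "UNIV :: 'a set" k] by simp

lemma sum_lists_length_Suc:
  fixes f :: "'a::finite list \<Rightarrow> 'b::comm_monoid_add"
  shows "(\<Sum>xs | length xs = Suc k. f xs) = (\<Sum>i\<in>UNIV. \<Sum>xs | length xs = k. f (i # xs))"
proof -
  have eq: "{xs :: 'a list. length xs = Suc k} = (\<lambda>(i, xs). i # xs) ` (UNIV \<times> {xs. length xs = k})"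
    by (auto simp: image_def length_Suc_conv)
  have inj: "inj_on (\<lambda>(i, xs). i # xs) (UNIV \<times> {xs :: 'a list. length xs = k})"
    by (auto simp: inj_on_def)
  show ?thesis
    unfolding eq sum.reindex[OF inj] sum.cartesian_product by (simp add: case_prod_beta)
qed

definition line_deriv :: "(real^'n::finite \<Rightarrow> real) \<Rightarrow> real^'n \<Rightarrow> real^'n \<Rightarrow> nat \<Rightarrow> real \<Rightarrow> real" where
  "line_deriv U x y k s =
     (\<Sum>xs | length xs = k. prod_list (map (\<lambda>i. - y $ i) xs) * partial_list xs U (x - s *\<^sub>R y))"

lemma line_deriv_0: "line_deriv U x y 0 = (\<lambda>s. U (x - s *\<^sub>R y))"
proof -
  have "{xs :: 'n list. length xs = 0} = {[]}" by auto
  then show ?thesis by (simp add: line_deriv_def fun_eq_iff)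
qed

lemma has_real_derivative_line_deriv:
  assumes C: "C_k_on n S U" and k: "k < n" and s: "x - s *\<^sub>R y \<in> S"
  shows "DERIV (line_deriv U x y k) s :> line_deriv U x y (Suc k) s"
proof -
  have "DERIV (\<lambda>s. partial_list xs U (x + s *\<^sub>R (- y))) s :>
      (\<Sum>i\<in>UNIV. (- y) $ i * partial_deriv i (partial_list xs U) (x + s *\<^sub>R (- y)))"
    if "length xs = k" for xs
    by (rule has_real_derivative_along_line_partials) (use C_k_on_differentiable[OF C _ s] that k in simp)
  then have "DERIV (line_deriv U x y k) s :> (\<Sum>xs | length xs = k. prod_list (map (\<lambda>i. - y $ i) xs) *
      (\<Sum>i\<in>UNIV. - y $ i * partial_list (i # xs) U (x - s *\<^sub>R y)))"
    unfolding line_deriv_def[abs_def] by (intro DERIV_sum DERIV_cmult) simp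
  also have "(\<Sum>xs | length xs = k. prod_list (map (\<lambda>i. - y $ i) xs) *
      (\<Sum>i\<in>UNIV. - y $ i * partial_list (i # xs) U (x - s *\<^sub>R y))) = line_deriv U x y (Suc k) s"
    unfolding line_deriv_def sum_lists_length_Suc by (subst sum.swap) (simp add: sum_distrib_left mult_ac)
  finally show ?thesis .
qed

lemma prod_list_neg_eq_monomial:
  "prod_list (map (\<lambda>i. - y $ i) xs) = (-1) ^ length xs * monomial (mset xs) y"
  by (induction xs) (simp_all add: monomial_def)

definition taylor_polynomial :: "(real^'n::finite \<Rightarrow> real) \<Rightarrow> nat \<Rightarrow> real^'n \<Rightarrow> real^'n \<Rightarrow> real" where
  "taylor_polynomial U m x y =
     (\<Sum>k\<le>m. \<Sum>xs | length xs = k. (-1) ^ k * partial_list xs U x / fact k * monomial (mset xs) y)"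

lemma taylor_along_segment:
  assumes C: "C_k_on (Suc m) S U" and seg: "\<And>s. s \<in> {0..1} \<Longrightarrow> x - s *\<^sub>R y \<in> S"
  obtains t where "0 < t" "t < 1"
    "U (x - y) = taylor_polynomial U m x y + line_deriv U x y (Suc m) t / fact (Suc m)"
proof -
  have "\<exists>t. 0 < t \<and> t < 1 \<and> (\<lambda>s. U (x - s *\<^sub>R y)) 1 =
      (\<Sum>k<Suc m. line_deriv U x y k 0 / fact k * 1 ^ k) + line_deriv U x y (Suc m) t / fact (Suc m) * 1 ^ Suc m"
    by (rule Maclaurin) (use line_deriv_0 has_real_derivative_line_deriv[OF C] seg in auto)
  moreover have "line_deriv U x y k 0 / fact k =
      (\<Sum>xs | length xs = k. (-1) ^ k * partial_list xs U x / fact k * monomial (mset xs) y)" for k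
    unfolding line_deriv_def sum_divide_distrib by (intro sum.cong refl) (simp add: prod_list_neg_eq_monomial)
  ultimately show ?thesis
    using that by (auto simp: taylor_polynomial_def lessThan_Suc_atMost)
qed

lemma taylor_remainder_bound:
  assumes C: "C_k_on (Suc m) S U" and seg: "\<And>s. s \<in> {0..1} \<Longrightarrow> x - s *\<^sub>R y \<in> S"
    and bound: "\<And>xs s. length xs = Suc m \<Longrightarrow> s \<in> {0..1} \<Longrightarrow> \<bar>partial_list xs U (x - s *\<^sub>R y)\<bar> \<le> B"
  shows "\<bar>U (x - y) - taylor_polynomial U m x y\<bar>
           \<le> B * (\<Sum>xs | length xs = Suc m. \<bar>monomial (mset xs) y\<bar>) / fact (Suc m)"
proof -
  obtain t where t: "0 < t" "t < 1"
    "U (x - y) = taylor_polynomial U m x y + line_deriv U x y (Suc m) t / fact (Suc m)"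
    using taylor_along_segment[OF C seg] by blast
  have "\<bar>line_deriv U x y (Suc m) t\<bar>
      \<le> (\<Sum>xs | length xs = Suc m. \<bar>prod_list (map (\<lambda>i. - y $ i) xs) * partial_list xs U (x - t *\<^sub>R y)\<bar>)"
    unfolding line_deriv_def by (rule sum_abs)
  also have "\<dots> \<le> (\<Sum>xs | length xs = Suc m. \<bar>monomial (mset xs) y\<bar> * B)"
    using bound t by (intro sum_mono) (auto simp: prod_list_neg_eq_monomial abs_mult mult_left_mono)
  finally have "\<bar>line_deriv U x y (Suc m) t\<bar> \<le> B * (\<Sum>xs | length xs = Suc m. \<bar>monomial (mset xs) y\<bar>)"
    by (simp add: sum_distrib_left mult.commute)
  then show ?thesis
    using t(3) by (simp add: divide_right_mono del: fact_Suc)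
qed

section \<open>Vanishing moments and the convolution on the boundary\<close>

lemma notin_supp_imp_zero: "y \<notin> supp f \<Longrightarrow> f y = 0"
  unfolding supp_def using closure_subset[of "{x. f x \<noteq> 0}"] by blast

lemma integrable_on_UNIV_compact_support:
  fixes f :: "'a::euclidean_space \<Rightarrow> 'b::banach"
  assumes "continuous_on UNIV f" "compact K" "\<And>y. y \<notin> K \<Longrightarrow> f y = 0"
  shows "f integrable_on UNIV"
proof -
  obtain a where a: "K \<subseteq> cbox (-a) a"
    using bounded_subset_cbox_symmetric[OF compact_imp_bounded[OF assms(2)]] by blast
  have "f integrable_on cbox (-a) a"
    by (rule integrable_continuous) (rule continuous_on_subset[OF assms(1)], simp)
  then show ?thesis
    by (rule integrable_on_superset) (use a assms(3) in auto)
qed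

lemma continuous_on_monomial: "continuous_on S (monomial \<beta>)"
  unfolding monomial_def by (induction \<beta>) (auto intro!: continuous_intros)

lemma vanishing_moments_taylor_polynomial:
  assumes rc: "continuous_on UNIV \<rho>" and cs: "compact (supp \<rho>)"
    and moments: "\<And>\<alpha>. size \<alpha> \<le> m \<Longrightarrow> integral UNIV (\<lambda>x. \<rho> x * monomial \<alpha> x) = 0"
  shows "((\<lambda>y. \<rho> y * taylor_polynomial U m x y) has_integral 0) UNIV"
proof -
  have moment: "((\<lambda>y. \<rho> y * monomial (mset xs) y) has_integral 0) UNIV" if "length xs \<le> m" for xs
  proof -
    have "(\<lambda>y. \<rho> y * monomial (mset xs) y) integrable_on UNIV"
      by (rule integrable_on_UNIV_compact_support[OF _ cs])
        (auto intro!: continuous_intros rc continuous_on_monomial simp: notin_supp_imp_zero)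
    then show ?thesis
      using moments[of "mset xs"] that by (metis integrable_integral size_mset)
  qed
  have "((\<lambda>y. \<Sum>k\<le>m. \<Sum>xs | length xs = k.
          (-1) ^ k * partial_list xs U x / fact k * (\<rho> y * monomial (mset xs) y))
        has_integral (\<Sum>k\<le>m. \<Sum>xs | length xs = k. (-1) ^ k * partial_list xs U x / fact k * 0)) UNIV"
    by (intro has_integral_sum finite_atMost finite_lists_length has_integral_mult_right moment) auto
  then show ?thesis
    unfolding taylor_polynomial_def sum_distrib_left by (simp add: mult_ac)
qed

definition remainder_weight :: "(real^'n::finite \<Rightarrow> real) \<Rightarrow> nat \<Rightarrow> real^'n \<Rightarrow> real" where
  "remainder_weight \<rho> m y = \<bar>\<rho> y\<bar> * (\<Sum>xs | length xs = Suc m. \<bar>monomial (mset xs) y\<bar>) / fact (Suc m)"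

lemma remainder_weight_nonneg: "0 \<le> remainder_weight \<rho> m y"
  unfolding remainder_weight_def by (intro divide_nonneg_pos mult_nonneg_nonneg sum_nonneg) auto

lemma remainder_weight_integrable:
  assumes "continuous_on UNIV \<rho>" "compact (supp \<rho>)"
  shows "remainder_weight \<rho> m integrable_on UNIV"
  unfolding remainder_weight_def[abs_def]
  by (rule integrable_on_UNIV_compact_support[OF _ assms(2)])
    (auto intro!: continuous_intros assms(1) continuous_on_monomial simp: notin_supp_imp_zero)

lemma convolution_bound_remainder_weight:
  assumes rc: "continuous_on UNIV \<rho>" and cs: "compact (supp \<rho>)"
    and moments: "\<And>\<alpha>. size \<alpha> \<le> m \<Longrightarrow> integral UNIV (\<lambda>x. \<rho> x * monomial \<alpha> x) = 0"
    and C: "C_k_on (Suc m) S U"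
    and seg: "\<And>y s. y \<in> supp \<rho> \<Longrightarrow> s \<in> {0..1} \<Longrightarrow> x - s *\<^sub>R y \<in> S"
    and bound: "\<And>xs y s. length xs = Suc m \<Longrightarrow> y \<in> supp \<rho> \<Longrightarrow> s \<in> {0..1} \<Longrightarrow>
                  \<bar>partial_list xs U (x - s *\<^sub>R y)\<bar> \<le> B"
    and B: "0 \<le> B"
  shows "\<bar>convolution U \<rho> x\<bar> \<le> B * integral UNIV (remainder_weight \<rho> m)"
proof -
  define R where "R y = U (x - y) * \<rho> y - \<rho> y * taylor_polynomial U m x y" for y
  have poly: "((\<lambda>y. \<rho> y * taylor_polynomial U m x y) has_integral 0) UNIV"
    by (rule vanishing_moments_taylor_polynomial[OF rc cs moments])
  have R: "\<bar>R y\<bar> \<le> B * remainder_weight \<rho> m y" for y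
  proof (cases "y \<in> supp \<rho>")
    case True
    have "\<bar>R y\<bar> = \<bar>\<rho> y\<bar> * \<bar>U (x - y) - taylor_polynomial U m x y\<bar>"
      by (simp add: R_def abs_mult algebra_simps flip: abs_mult)
    also have "\<dots> \<le> \<bar>\<rho> y\<bar> * (B * (\<Sum>xs | length xs = Suc m. \<bar>monomial (mset xs) y\<bar>) / fact (Suc m))"
      by (rule mult_left_mono[OF taylor_remainder_bound[OF C seg[OF True] bound[OF _ True]] abs_ge_zero])
    finally show ?thesis
      by (simp add: remainder_weight_def mult.left_commute)
  qed (simp add: R_def notin_supp_imp_zero remainder_weight_def)
  show ?thesis
  proof (cases "(\<lambda>y. U (x - y) * \<rho> y) integrable_on UNIV")
    case True
    then have "convolution U \<rho> x = integral UNIV R"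
      using poly unfolding convolution_def R_def by (simp add: integral_diff has_integral_integrable_integral)
    moreover have "R integrable_on UNIV"
      using True poly unfolding R_def by (intro integrable_diff) auto
    moreover have "(\<lambda>y. B * remainder_weight \<rho> m y) integrable_on UNIV"
      using integrable_on_cmult_left[OF remainder_weight_integrable[OF rc cs]] by simp
    ultimately show ?thesis
      using integral_norm_bound_integral[of R UNIV "\<lambda>y. B * remainder_weight \<rho> m y"] R by simp
  next
    case False
    then show ?thesis
      using B integral_nonneg[OF remainder_weight_integrable[OF rc cs] remainder_weight_nonneg]
      by (simp add: convolution_def not_integrable_integral)
  qed
qed

lemma finite_multisets_size: "finite {\<beta> :: 'a::finite multiset. size \<beta> = k}"
proof (rule finite_subset[OF _ finite_imageI[OF finite_lists_length]])
  show "{\<beta> :: 'a multiset. size \<beta> = k} \<subseteq> mset ` {xs. length xs = k}"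
    by (auto simp: image_iff) (metis ex_mset size_mset)
qed

lemma convolution_bound_multi_partial:
  fixes \<rho> U :: "real^'n::finite \<Rightarrow> real"
  assumes rc: "continuous_on UNIV \<rho>" and cs: "compact (supp \<rho>)"
    and moments: "\<And>\<alpha>. size \<alpha> \<le> m \<Longrightarrow> integral UNIV (\<lambda>x. \<rho> x * monomial \<alpha> x) = 0"
    and S: "open S" and C: "C_k_on (Suc m) S U"
    and seg: "\<And>y s. y \<in> supp \<rho> \<Longrightarrow> s \<in> {0..1} \<Longrightarrow> x - s *\<^sub>R y \<in> S"
    and M_nonneg: "\<And>\<beta>. size \<beta> = Suc m \<Longrightarrow> 0 \<le> M \<beta>"
    and M: "\<And>\<beta> y s. size \<beta> = Suc m \<Longrightarrow> y \<in> supp \<rho> \<Longrightarrow> s \<in> {0..1} \<Longrightarrow>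
              \<bar>multi_partial \<beta> U (x - s *\<^sub>R y)\<bar> \<le> M \<beta>"
  shows "\<bar>convolution U \<rho> x\<bar> \<le> (\<Sum>\<beta> | size \<beta> = Suc m. M \<beta>) * integral UNIV (remainder_weight \<rho> m)"
proof (rule convolution_bound_remainder_weight[OF rc cs moments C seg])
  show "0 \<le> (\<Sum>\<beta> | size \<beta> = Suc m. M \<beta>)"
    using M_nonneg by (intro sum_nonneg) simp
  fix xs :: "'n list" and y :: "real^'n" and s :: real
  assume xs: "length xs = Suc m" and y: "y \<in> supp \<rho>" and s: "s \<in> {0..1}"
  have "partial_list xs U (x - s *\<^sub>R y) = multi_partial (mset xs) U (x - s *\<^sub>R y)"
    using multi_partial_mset[OF C S _ seg[OF y s]] xs by simp
  also have "\<bar>\<dots>\<bar> \<le> M (mset xs)"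
    using M xs y s by simp
  also have "\<dots> \<le> (\<Sum>\<beta> | size \<beta> = Suc m. M \<beta>)"
    using M_nonneg xs by (intro member_le_sum finite_multisets_size) auto
  finally show "\<bar>partial_list xs U (x - s *\<^sub>R y)\<bar> \<le> (\<Sum>\<beta> | size \<beta> = Suc m. M \<beta>)" .
qed

lemma max_principle_difference_bound:
  assumes L: "linear_op L"
    and f: "\<And>x. x \<in> \<Omega> \<Longrightarrow> L f x = \<rho> x" and g: "\<And>x. x \<in> \<Omega> \<Longrightarrow> L g x = \<rho> x"
    and g_boundary: "\<And>x. x \<in> frontier \<Omega> \<Longrightarrow> g x = 0"
    and f_boundary: "\<And>x. x \<in> frontier \<Omega> \<Longrightarrow> \<bar>f x\<bar> \<le> B"
    and max_principle: "\<forall>w B. (\<forall>x\<in>\<Omega>. L w x = 0) \<longrightarrow> (\<forall>x\<in>frontier \<Omega>. \<bar>w x\<bar> \<le> B)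
                          \<longrightarrow> (\<forall>x\<in>\<Omega>. \<bar>w x\<bar> \<le> B)"
    and x: "x \<in> \<Omega>"
  shows "\<bar>f x - g x\<bar> \<le> B"
proof -
  have "L (\<lambda>x. 1 * f x + (-1) * g x) = (\<lambda>x. 1 * L f x + (-1) * L g x)"
    using L unfolding linear_op_def by blast
  then have "\<forall>x\<in>\<Omega>. L (\<lambda>x. f x - g x) x = 0"
    using f g by simp
  moreover have "\<forall>x\<in>frontier \<Omega>. \<bar>f x - g x\<bar> \<le> B"
    using f_boundary g_boundary by simp
  ultimately show ?thesis
    using max_principle x by blast
qed

theorem theorem1:
  fixes \<rho> :: "real^'n::finite \<Rightarrow> real" and m :: nat
  assumes smooth: "smooth_on UNIV \<rho>"
    and compact_supp: "compact (supp \<rho>)"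
    and moments: "\<And>\<alpha>. size \<alpha> \<le> m \<Longrightarrow> integral UNIV (\<lambda>x. \<rho> x * monomial \<alpha> x) = 0"
  shows "\<exists>c>0. \<forall>(U :: real^'n \<Rightarrow> real) (L :: (real^'n \<Rightarrow> real) \<Rightarrow> (real^'n \<Rightarrow> real))
                 (\<Omega> :: (real^'n) set) (\<phi>t :: real^'n \<Rightarrow> real) (S :: (real^'n) set)
                 (M :: 'n multiset \<Rightarrow> real).
      (\<forall>r. U absolutely_integrable_on cball 0 r)
      \<and> open S \<and> C_k_on (Suc m) S U
      \<and> (\<forall>x\<in>frontier \<Omega>. \<forall>y\<in>supp \<rho>. \<forall>s\<in>{0..1}. x - s *\<^sub>R y \<in> S)
      \<and> linear_op L \<and> even_order_op L
      \<and> (\<forall>x. L (convolution U \<rho>) x = \<rho> x)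
      \<and> open \<Omega> \<and> connected \<Omega> \<and> bounded \<Omega> \<and> \<Omega> \<noteq> {} \<and> supp \<rho> \<subseteq> \<Omega>
      \<and> (\<forall>x\<in>\<Omega>. L \<phi>t x = \<rho> x) \<and> (\<forall>x\<in>frontier \<Omega>. \<phi>t x = 0)
      \<and> (\<forall>w B. (\<forall>x\<in>\<Omega>. L w x = 0) \<longrightarrow> (\<forall>x\<in>frontier \<Omega>. \<bar>w x\<bar> \<le> B)
              \<longrightarrow> (\<forall>x\<in>\<Omega>. \<bar>w x\<bar> \<le> B))
      \<and> (\<forall>\<beta>. size \<beta> = Suc m \<longrightarrow> 0 \<le> M \<beta> \<and>
            (\<forall>x\<in>frontier \<Omega>. \<forall>y\<in>supp \<rho>. \<forall>s\<in>{0..1}.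
               \<bar>multi_partial \<beta> U (x - s *\<^sub>R y)\<bar> \<le> M \<beta>))
      \<longrightarrow> (\<forall>x\<in>\<Omega>. \<bar>convolution U \<rho> x - \<phi>t x\<bar>
              \<le> c * (\<Sum>\<beta>\<in>{\<beta>::'n multiset. size \<beta> = Suc m}. M \<beta>))"
proof -
  have rc: "continuous_on UNIV \<rho>"
    using smooth by (rule smooth_on_imp_continuous_on)
  define c where "c = integral UNIV (remainder_weight \<rho> m) + 1"
  have c: "0 < c" "integral UNIV (remainder_weight \<rho> m) \<le> c"
    using integral_nonneg[OF remainder_weight_integrable[OF rc compact_supp] remainder_weight_nonneg, of m]
    by (simp_all add: c_def)
  have bound: "\<bar>convolution U \<rho> x - \<phi>t x\<bar> \<le> c * (\<Sum>\<beta> | size \<beta> = Suc m. M \<beta>)"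
    if "open S" "C_k_on (Suc m) S U" "\<forall>x\<in>frontier \<Omega>. \<forall>y\<in>supp \<rho>. \<forall>s\<in>{0..1}. x - s *\<^sub>R y \<in> S"
      and "linear_op L" "\<forall>x. L (convolution U \<rho>) x = \<rho> x"
      and "\<forall>x\<in>\<Omega>. L \<phi>t x = \<rho> x" "\<forall>x\<in>frontier \<Omega>. \<phi>t x = 0"
      and "\<forall>w B. (\<forall>x\<in>\<Omega>. L w x = 0) \<longrightarrow> (\<forall>x\<in>frontier \<Omega>. \<bar>w x\<bar> \<le> B) \<longrightarrow> (\<forall>x\<in>\<Omega>. \<bar>w x\<bar> \<le> B)"
      and M: "\<forall>\<beta>. size \<beta> = Suc m \<longrightarrow> 0 \<le> M \<beta> \<and>
               (\<forall>x\<in>frontier \<Omega>. \<forall>y\<in>supp \<rho>. \<forall>s\<in>{0..1}. \<bar>multi_partial \<beta> U (x - s *\<^sub>R y)\<bar> \<le> M \<beta>)"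
      and "x \<in> \<Omega>"
    for U L \<Omega> \<phi>t S M x
  proof (rule max_principle_difference_bound[where L = L and \<Omega> = \<Omega>])
    fix x assume x: "x \<in> frontier \<Omega>"
    have "\<bar>convolution U \<rho> x\<bar>
        \<le> (\<Sum>\<beta> | size \<beta> = Suc m. M \<beta>) * integral UNIV (remainder_weight \<rho> m)"
      by (rule convolution_bound_multi_partial[OF rc compact_supp moments]) (use that x M in auto)
    also have "\<dots> \<le> (\<Sum>\<beta> | size \<beta> = Suc m. M \<beta>) * c"
      using M c(2) by (intro mult_left_mono sum_nonneg) auto
    finally show "\<bar>convolution U \<rho> x\<bar> \<le> c * (\<Sum>\<beta> | size \<beta> = Suc m. M \<beta>)"
      by (simp add: mult.commute)
  qed (use that in auto)
  show ?thesis
    by (intro exI[of _ c] conjI c(1) allI impI ballI, elim conjE) (rule bound; assumption)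
qed

end
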